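(* Let $\ell,s$ be positive integers with $s\le\ell$, and let $\Omega_{s,\mathbf{i}}$ ($\mathbf{i}\in\mathbb{Z}_{\ge0}^h$, $|\mathbf{i}|\le s$) be the unique elements of $\mathcal{R}$ with $\deg_{\mathcal{H}}\Omega_{s,\mathbf{i}}\le\deg_{\mathcal{H}}\Lambda_s+|\mathbf{i}|(2g-1)$ and $\Lambda_s(\mathbf{f}-\mathbf{R})^{\mathbf{i}}=G^{|\mathbf{i}|}\Omega_{s,\mathbf{i}}$. Then for all $\mathbf{j}\in\mathbb{Z}_{\ge0}^h$ with $1\le|\mathbf{j}|\le\ell$: $$\Lambda_s\mathbf{f}^{\mathbf{j}}=\sum_{\mathbf{i}\preceq\mathbf{j}}\Omega_{s,\mathbf{i}}\binom{\mathbf{j}}{\mathbf{i}}\mathbf{R}^{\mathbf{j}-\mathbf{i}}G^{|\mathbf{i}|}\quad\text{if } 1\le|\mathbf{j}|<s,$$ $$\Lambda_s\mathbf{f}^{\mathbf{j}}\equiv\sum_{\mathbf{i}\preceq\mathbf{j},\ |\mathbf{i}|<s}\Omega_{s,\mathbf{i}}\binom{\mathbf{j}}{\mathbf{i}}\mathbf{R}^{\mathbf{j}-\mathbf{i}}G^{|\mathbf{i}|}\mod G^s\quad\text{if } s\le|\mathbf{j}|\le\ell,$$ as congruences over $\mathcal{R}$.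
   Context: Let $q$ be a prime power. The Hermitian curve over $\mathbb{F}_{q^2}$ is the smooth projective plane curve with affine equation $Y^q+Y=X^{q+1}$; it has genus $g=\tfrac12 q(q-1)$, $n=q^3$ affine rational points $P_1,\dots,P_n$ and the point at infinity $P_\infty$. Let $\mathcal{R}=\bigcup_{m\ge0}\mathcal{L}(mP_\infty)=\mathbb{F}_{q^2}[X,Y]/(Y^q+Y-X^{q+1})$ with basis $\{X^iY^j: i\ge0,0\le j<q\}$; $\deg_{\mathcal{H}} f=-v_{P_\infty}(f)$ ($v_P$ the valuation at $P$), so $\deg_{\mathcal{H}}(X^iY^j)=iq+j(q+1)$; $f\ne0$ is monic if the coefficient of its basis monomial of largest $\deg_{\mathcal{H}}$ is $1$. Fix integers $h\ge1$ and $m_{\mathrm H}$ with $2(g-1)<m_{\mathrm H}<n$. Let $\mathbf{f}=(f_1,\dots,f_h)\in\mathcal{L}(m_{\mathrm H}P_\infty)^h$ and $\mathbf{r}=\mathbf{c}+\mathbf{e}\in\mathbb{F}_{q^2}^{h\times n}$ where $\mathbf{c}$ has $i$-th row $(f_i(P_1),\dots,f_i(P_n))$; $\mathcal{E}\subseteq\{1,\dots,n\}$ is the set of indices of nonzero columns of $\mathbf{e}$. $\Lambda_s$ is the unique monic element of minimal $\deg_{\mathcal{H}}$ of $\{\Lambda\in\mathcal{R}:v_{P_i}(\Lambda)\ge s\ \forall i\in\mathcal{E}\}$. $\mathbf{R}=(R_1,\dots,R_h)\in\mathcal{R}^h$ with $\deg_{\mathcal{H}}R_i<n+2g$ and $R_i(P_j)=r_{i,j}$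 for all $i,j$; $G=X^{q^2}-X$. For $\mathbf{i},\mathbf{j}\in\mathbb{Z}_{\ge0}^h$: $|\mathbf{i}|=\sum_\mu i_\mu$; $\mathbf{i}\preceq\mathbf{j}$ iff $i_\mu\le j_\mu$ for all $\mu$; $\mathbf{a}^{\mathbf{i}}=\prod_\mu a_\mu^{i_\mu}$ for $\mathbf{a}\in\mathcal{R}^h$; $\binom{\mathbf{j}}{\mathbf{i}}=\prod_\mu\binom{j_\mu}{i_\mu}$. *)

theory Defs
  imports "HOL-Computational_Algebra.Polynomial" "HOL-Computational_Algebra.Primes" "HOL-Library.Cardinality"
begin

text \<open>Elements of the coordinate ring R = F[X,Y]/(Y^q+Y-X^(q+1)) are represented by
  polynomials of type 'a poly poly: the outer variable is Y, the inner variable is X.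
  Equality in R is congruence modulo the curve polynomial H.\<close>

definition HX :: "'a::comm_ring_1 poly poly" where
  "HX = [: [:0, 1:] :]"

definition HY :: "'a::comm_ring_1 poly poly" where
  "HY = [:0, 1:]"

definition HC :: "'a::comm_ring_1 \<Rightarrow> 'a poly poly" where
  "HC c = [: [:c:] :]"

definition hcurve :: "nat \<Rightarrow> 'a::comm_ring_1 poly poly" where
  "hcurve q = HY ^ q + HY - HX ^ (q + 1)"

definition Gpoly :: "nat \<Rightarrow> 'a::comm_ring_1 poly poly" where
  "Gpoly q = HX ^ (q^2) - HX"

definition eqR :: "nat \<Rightarrow> 'a::comm_ring_1 poly poly \<Rightarrow> 'a poly poly \<Rightarrow> bool" where
  "eqR q f g \<longleftrightarrow> hcurve q dvd (f - g)"

definition congR :: "nat \<Rightarrow> 'a::comm_ring_1 poly poly \<Rightarrow> 'a poly poly \<Rightarrow> 'a poly poly \<Rightarrow> bool" where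
  "congR q f g M \<longleftrightarrow> (\<exists>a b. f - g = M * a + hcurve q * b)"

definition redR :: "nat \<Rightarrow> 'a::comm_ring_1 poly poly \<Rightarrow> 'a poly poly" where
  "redR q f = (THE r. degree r < q \<and> eqR q f r)"

definition coeffR :: "nat \<Rightarrow> 'a::comm_ring_1 poly poly \<Rightarrow> nat \<Rightarrow> nat \<Rightarrow> 'a" where
  "coeffR q f i j = coeff (coeff (redR q f) j) i"

definition hweight :: "nat \<Rightarrow> nat \<Rightarrow> nat \<Rightarrow> nat" where
  "hweight q i j = i * q + j * (q + 1)"

definition degH :: "nat \<Rightarrow> 'a::comm_ring_1 poly poly \<Rightarrow> nat" where
  "degH q f = Max {hweight q i j | i j. j < q \<and> coeffR q f i j \<noteq> 0}"

text \<open>deg_H f \<le> m (true for f = 0, whose degree is -infinity), i.e. f \<in> L(m P_inf).\<close>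
definition degH_le :: "nat \<Rightarrow> int \<Rightarrow> 'a::comm_ring_1 poly poly \<Rightarrow> bool" where
  "degH_le q m f \<longleftrightarrow> (\<forall>i j. j < q \<longrightarrow> coeffR q f i j \<noteq> 0 \<longrightarrow> int (hweight q i j) \<le> m)"

definition degH_lt :: "nat \<Rightarrow> int \<Rightarrow> 'a::comm_ring_1 poly poly \<Rightarrow> bool" where
  "degH_lt q m f \<longleftrightarrow> (\<forall>i j. j < q \<longrightarrow> coeffR q f i j \<noteq> 0 \<longrightarrow> int (hweight q i j) < m)"

definition monicR :: "nat \<Rightarrow> 'a::comm_ring_1 poly poly \<Rightarrow> bool" where
  "monicR q f \<longleftrightarrow> \<not> eqR q f 0 \<and>
     (\<exists>i j. j < q \<and> hweight q i j = degH q f \<and> coeffR q f i j = 1)"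

definition evalR :: "'a::comm_ring_1 poly poly \<Rightarrow> 'a \<times> 'a \<Rightarrow> 'a" where
  "evalR f P = poly (map_poly (\<lambda>p. poly p (fst P)) f) (snd P)"

definition hpoints :: "nat \<Rightarrow> ('a::comm_ring_1 \<times> 'a) set" where
  "hpoints q = {(a, b). b ^ q + b = a ^ (q + 1)}"

text \<open>v_P(f) \<ge> s for an affine point P = (a,b): f lies in m_P^s O_P, where O_P is the local
  ring at P and m_P = (X-a, Y-b) its maximal ideal (O_P is a DVR, so this is v_P(f) \<ge> s).\<close>
definition val_ge :: "nat \<Rightarrow> 'a::comm_ring_1 \<times> 'a \<Rightarrow> nat \<Rightarrow> 'a poly poly \<Rightarrow> bool" where
  "val_ge q P s f \<longleftrightarrow> (\<exists>u c d. evalR u P \<noteq> 0 \<and>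
     u * f = (\<Sum>k\<le>s. (HX - HC (fst P)) ^ k * (HY - HC (snd P)) ^ (s - k) * c k) + hcurve q * d)"

text \<open>Multi-indices in Z_{\<ge>0}^h: functions nat \<Rightarrow> nat vanishing from h on.\<close>
definition mindex :: "nat \<Rightarrow> (nat \<Rightarrow> nat) \<Rightarrow> bool" where
  "mindex h i \<longleftrightarrow> (\<forall>\<mu>\<ge>h. i \<mu> = 0)"

definition mabs :: "nat \<Rightarrow> (nat \<Rightarrow> nat) \<Rightarrow> nat" where
  "mabs h i = (\<Sum>\<mu><h. i \<mu>)"

definition mle :: "nat \<Rightarrow> (nat \<Rightarrow> nat) \<Rightarrow> (nat \<Rightarrow> nat) \<Rightarrow> bool" where
  "mle h i j \<longleftrightarrow> mindex h i \<and> (\<forall>\<mu><h. i \<mu> \<le> j \<mu>)"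

definition mpow :: "nat \<Rightarrow> (nat \<Rightarrow> 'a::comm_ring_1) \<Rightarrow> (nat \<Rightarrow> nat) \<Rightarrow> 'a" where
  "mpow h a i = (\<Prod>\<mu><h. a \<mu> ^ i \<mu>)"

definition mbinom :: "nat \<Rightarrow> (nat \<Rightarrow> nat) \<Rightarrow> (nat \<Rightarrow> nat) \<Rightarrow> nat" where
  "mbinom h j i = (\<Prod>\<mu><h. j \<mu> choose i \<mu>)"

definition prime_power :: "nat \<Rightarrow> bool" where
  "prime_power q \<longleftrightarrow> (\<exists>p k. prime p \<and> k > 0 \<and> q = p ^ k)"

end

theory Submission imports Defs "HOL-Library.FuncSet" begin

text \<open>Write \<open>f = F + R\<close> with \<open>F = f - R\<close> and expand \<open>\<Lambda> f\<^sup>j\<close> by the multi-index binomial theorem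
  into the terms \<open>(j choose i) R\<^sup>j\<^sup>-\<^sup>i \<Lambda> F\<^sup>i\<close>. For \<open>|i| \<le> s\<close> the hypothesis on \<open>\<Omega>\<close> replaces
  \<open>\<Lambda> F\<^sup>i\<close> by \<open>G\<^bsup>|i|\<^esup> \<Omega>\<^sub>i\<close>. If \<open>|i| \<ge> s\<close>, choose \<open>i' \<preceq> i\<close> with \<open>|i'| = s\<close>; then
  \<open>\<Lambda> F\<^sup>i = F\<^bsup>i-i'\<^esup> \<Lambda> F\<^bsup>i'\<^esup>\<close> is a multiple of \<open>G\<^sup>s\<close>, so these terms vanish modulo \<open>G\<^sup>s\<close>.\<close>

definition zero_extend :: "nat \<Rightarrow> (nat \<Rightarrow> nat) \<Rightarrow> nat \<Rightarrow> nat" where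
  "zero_extend h p = (\<lambda>\<mu>. if \<mu> < h then p \<mu> else 0)"

lemma bij_betw_zero_extend_mle:
  "bij_betw (zero_extend h) (PiE {..<h} (\<lambda>\<mu>. {..j \<mu>})) {i. mle h i j}"
proof (rule bij_betwI[where g="\<lambda>i. restrict i {..<h}"])
  show "zero_extend h \<in> PiE {..<h} (\<lambda>\<mu>. {..j \<mu>}) \<rightarrow> {i. mle h i j}"
    by (auto simp: zero_extend_def mle_def mindex_def PiE_def)
  show "(\<lambda>i. restrict i {..<h}) \<in> {i. mle h i j} \<rightarrow> PiE {..<h} (\<lambda>\<mu>. {..j \<mu>})"
    by (auto simp: mle_def)
  show "restrict (zero_extend h p) {..<h} = p" if "p \<in> PiE {..<h} (\<lambda>\<mu>. {..j \<mu>})" for p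
    using that by (auto simp: zero_extend_def PiE_def extensional_def)
  show "zero_extend h (restrict i {..<h}) = i" if "i \<in> {i. mle h i j}" for i
    using that by (auto simp: zero_extend_def mle_def mindex_def)
qed

lemma finite_mle: "finite {i. mle h i j}"
  using bij_betw_finite[OF bij_betw_zero_extend_mle] by (simp add: finite_PiE)

lemma mabs_mono: "\<forall>\<mu><h. i \<mu> \<le> j \<mu> \<Longrightarrow> mabs h i \<le> mabs h j"
  unfolding mabs_def by (rule sum_mono) auto

lemma mpow_split:
  assumes "\<forall>\<mu><h. i' \<mu> \<le> i \<mu>"
  shows "mpow h a i = mpow h a i' * mpow h a (\<lambda>\<mu>. i \<mu> - i' \<mu>)"
  unfolding mpow_def prod.distrib[symmetric]
  by (rule prod.cong) (auto simp: power_add[symmetric] assms)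

lemma mpow_add_binomial:
  fixes a b :: "nat \<Rightarrow> 'a::comm_ring_1"
  shows "mpow h (\<lambda>\<mu>. a \<mu> + b \<mu>) j =
    (\<Sum>i\<in>{i. mle h i j}. of_nat (mbinom h j i) * mpow h a i * mpow h b (\<lambda>\<mu>. j \<mu> - i \<mu>))"
proof -
  have "mpow h (\<lambda>\<mu>. a \<mu> + b \<mu>) j =
      (\<Prod>\<mu><h. \<Sum>k\<le>j \<mu>. of_nat (j \<mu> choose k) * a \<mu> ^ k * b \<mu> ^ (j \<mu> - k))"
    unfolding mpow_def by (simp add: binomial_ring)
  also have "\<dots> = (\<Sum>p\<in>PiE {..<h} (\<lambda>\<mu>. {..j \<mu>}).
      \<Prod>\<mu><h. of_nat (j \<mu> choose p \<mu>) * a \<mu> ^ p \<mu> * b \<mu> ^ (j \<mu> - p \<mu>))"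
    by (rule prod_sum_PiE) auto
  also have "\<dots> = (\<Sum>p\<in>PiE {..<h} (\<lambda>\<mu>. {..j \<mu>}).
      (\<lambda>i. of_nat (mbinom h j i) * mpow h a i * mpow h b (\<lambda>\<mu>. j \<mu> - i \<mu>)) (zero_extend h p))"
    unfolding mbinom_def mpow_def of_nat_prod prod.distrib[symmetric]
    by (intro sum.cong prod.cong) (auto simp: zero_extend_def)
  also have "\<dots> = (\<Sum>i\<in>{i. mle h i j}. of_nat (mbinom h j i) * mpow h a i * mpow h b (\<lambda>\<mu>. j \<mu> - i \<mu>))"
    by (rule sum.reindex_bij_betw[OF bij_betw_zero_extend_mle])
  finally show ?thesis .
qed

lemma exists_mindex_below_with_mabs:
  "s \<le> mabs h i \<Longrightarrow> \<exists>i'. mindex h i' \<and> (\<forall>\<mu><h. i' \<mu> \<le> i \<mu>) \<and> mabs h i' = s"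
proof (induction h)
  case 0
  then show ?case by (auto simp: mabs_def mindex_def intro!: exI[of _ "\<lambda>_. 0"])
next
  case (Suc h)
  show ?case
  proof (cases "s \<le> mabs h i")
    case True
    then obtain i' where i': "mindex h i'" "\<forall>\<mu><h. i' \<mu> \<le> i \<mu>" "mabs h i' = s"
      using Suc.IH by blast
    then show ?thesis
      by (intro exI[of _ i']) (auto simp: mindex_def mabs_def less_Suc_eq)
  next
    case False
    define i' where "i' = (\<lambda>\<mu>. if \<mu> < h then i \<mu> else if \<mu> = h then s - mabs h i else 0)"
    have "mabs h i' = mabs h i"
      unfolding mabs_def i'_def by (rule sum.cong) auto
    then show ?thesis using False Suc.prems
      by (intro exI[of _ i']) (auto simp: mindex_def mabs_def i'_def less_Suc_eq)
  qed
qed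

lemma eqR_mult_left: "eqR q x y \<Longrightarrow> eqR q (c * x) (c * y)"
  unfolding eqR_def by (simp add: right_diff_distrib[symmetric])

lemma eqR_sum:
  "(\<And>x. x \<in> A \<Longrightarrow> eqR q (F x) (G x)) \<Longrightarrow> eqR q (sum F A) (sum G A)"
  unfolding eqR_def by (simp add: dvd_sum sum_subtractf[symmetric])

lemma eqR_imp_congR:
  assumes "eqR q x y"
  shows "congR q x y M"
proof -
  obtain k where "x - y = M * 0 + hcurve q * k"
    using assms unfolding eqR_def by auto
  then show ?thesis unfolding congR_def by blast
qed

lemma congR_sum:
  assumes "finite A" "\<And>x. x \<in> A \<Longrightarrow> congR q (F x) (G x) M"
  shows "congR q (sum F A) (sum G A) M"
  using assms
proof (induction A rule: finite_induct)
  case empty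
  show ?case unfolding congR_def by (auto intro!: exI[of _ 0])
next
  case (insert x A)
  obtain a b where "sum F A - sum G A = M * a + hcurve q * b"
    using insert unfolding congR_def by blast
  moreover obtain c d where "F x - G x = M * c + hcurve q * d"
    using insert.prems unfolding congR_def by blast
  ultimately show ?case
    using insert.hyps unfolding congR_def
    by (intro exI[of _ "a + c"] exI[of _ "b + d"]) (simp add: algebra_simps)
qed

lemma eqR_multiple_imp_congR_zero:
  assumes "eqR q x (M * y)"
  shows "congR q (c * x) 0 M"
proof -
  obtain k where "x - M * y = hcurve q * k"
    using assms unfolding eqR_def by blast
  then have "c * x - 0 = M * (c * y) + hcurve q * (c * k)"
    by (simp add: algebra_simps eq_diff_eq)
  then show ?thesis unfolding congR_def by blast
qed

lemma mult_mpow_congR_zero: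
  assumes Om: "\<And>i. mindex h i \<Longrightarrow> mabs h i = s \<Longrightarrow> eqR q (L * mpow h F i) (M ^ s * Om i)"
    and "s \<le> mabs h i"
  shows "congR q (c * (L * mpow h F i)) 0 (M ^ s)"
proof -
  obtain i' where i': "mindex h i'" "\<forall>\<mu><h. i' \<mu> \<le> i \<mu>" "mabs h i' = s"
    using exists_mindex_below_with_mabs[OF assms(2)] by blast
  have "c * (L * mpow h F i) = c * mpow h F (\<lambda>\<mu>. i \<mu> - i' \<mu>) * (L * mpow h F i')"
    using mpow_split[OF i'(2), of F] by (simp add: algebra_simps)
  with Om[OF i'(1,3)] show ?thesis
    by (metis eqR_multiple_imp_congR_zero)
qed

lemma mpow_expansion_modulo:
  fixes L M :: "'a::comm_ring_1 poly poly" and f R :: "nat \<Rightarrow> 'a poly poly"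
    and Om :: "(nat \<Rightarrow> nat) \<Rightarrow> 'a poly poly" and h :: nat and j :: "nat \<Rightarrow> nat"
  defines "Y \<equiv> \<lambda>i. Om i * of_nat (mbinom h j i) * mpow h R (\<lambda>\<mu>. j \<mu> - i \<mu>) * M ^ mabs h i"
  assumes Om: "\<And>i. mindex h i \<Longrightarrow> mabs h i \<le> s \<Longrightarrow>
      eqR q (L * mpow h (\<lambda>\<mu>. f \<mu> - R \<mu>) i) (M ^ mabs h i * Om i)"
  shows "mabs h j < s \<Longrightarrow> eqR q (L * mpow h f j) (\<Sum>i\<in>{i. mle h i j}. Y i)"
    and "s \<le> mabs h j \<Longrightarrow>
      congR q (L * mpow h f j) (\<Sum>i\<in>{i. mle h i j \<and> mabs h i < s}. Y i) (M ^ s)"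
proof -
  define F where "F = (\<lambda>\<mu>. f \<mu> - R \<mu>)"
  define X where "X = (\<lambda>i. of_nat (mbinom h j i) * mpow h R (\<lambda>\<mu>. j \<mu> - i \<mu>) * (L * mpow h F i))"
  have "L * mpow h f j = L * mpow h (\<lambda>\<mu>. F \<mu> + R \<mu>) j"
    by (simp add: F_def)
  then have expansion: "L * mpow h f j = (\<Sum>i\<in>{i. mle h i j}. X i)"
    by (simp add: mpow_add_binomial sum_distrib_left X_def algebra_simps)
  have XY: "eqR q (X i) (Y i)" if "mle h i j" "mabs h i \<le> s" for i
  proof -
    have "mindex h i" using that(1) by (simp add: mle_def)
    from eqR_mult_left[OF Om[OF this that(2)],
        of "of_nat (mbinom h j i) * mpow h R (\<lambda>\<mu>. j \<mu> - i \<mu>)"]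
    show ?thesis by (simp add: X_def Y_def F_def mult_ac)
  qed
  show "eqR q (L * mpow h f j) (\<Sum>i\<in>{i. mle h i j}. Y i)" if "mabs h j < s"
    unfolding expansion
    using that by (intro eqR_sum XY) (auto simp: mle_def dest!: mabs_mono)
  have "congR q (X i) (if mabs h i < s then Y i else 0) (M ^ s)" if "mle h i j" for i
  proof (cases "mabs h i < s")
    case True
    then show ?thesis using XY[OF that] by (simp add: eqR_imp_congR)
  next
    case False
    have "\<And>i'. mindex h i' \<Longrightarrow> mabs h i' = s \<Longrightarrow> eqR q (L * mpow h F i') (M ^ s * Om i')"
      using Om unfolding F_def by fastforce
    then have "congR q (X i) 0 (M ^ s)"
      using False unfolding X_def by (intro mult_mpow_congR_zero) auto
    with False show ?thesis by simp
  qed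
  then have "congR q (\<Sum>i\<in>{i. mle h i j}. X i)
      (\<Sum>i\<in>{i. mle h i j}. if mabs h i < s then Y i else 0) (M ^ s)"
    by (intro congR_sum finite_mle) auto
  moreover have "(\<Sum>i\<in>{i. mle h i j \<and> mabs h i < s}. Y i) =
      (\<Sum>i\<in>{i. mle h i j}. if mabs h i < s then Y i else 0)"
    using sum.inter_filter[OF finite_mle, of Y h j "\<lambda>i. mabs h i < s"]
    by (simp add: conj_commute)
  ultimately show "congR q (L * mpow h f j) (\<Sum>i\<in>{i. mle h i j \<and> mabs h i < s}. Y i) (M ^ s)"
    by (simp add: expansion)
qed

theorem theorem2:
  fixes q h mH l s :: nat
    and f :: "nat \<Rightarrow> ('a::{field,finite}) poly poly"
    and e :: "nat \<Rightarrow> 'a \<times> 'a \<Rightarrow> 'a"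
    and R :: "nat \<Rightarrow> 'a poly poly"
    and Lam :: "'a poly poly"
    and Om :: "(nat \<Rightarrow> nat) \<Rightarrow> 'a poly poly"
  defines "n \<equiv> q ^ 3"
    and "g \<equiv> q * (q - 1) div 2"
    and "r \<equiv> (\<lambda>\<mu> P. evalR (f \<mu>) P + e \<mu> P)"
    and "E \<equiv> {P \<in> hpoints q. \<exists>\<mu><h. e \<mu> P \<noteq> 0}"
  assumes q: "prime_power q"
    and card: "CARD('a) = q ^ 2"
    and h: "h \<ge> 1"
    and mH: "2 * (int g - 1) < int mH" "mH < n"
    and f: "\<forall>\<mu><h. degH_le q (int mH) (f \<mu>)"
    and Lam_in: "\<forall>P\<in>E. val_ge q P s Lam"
    and Lam_monic: "monicR q Lam"
    and Lam_min: "\<forall>L. (\<forall>P\<in>E. val_ge q P s L) \<longrightarrow> \<not> eqR q L 0 \<longrightarrow> degH q Lam \<le> degH q L"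
    and R: "\<forall>\<mu><h. degH_lt q (int (n + 2 * g)) (R \<mu>) \<and> (\<forall>P\<in>hpoints q. evalR (R \<mu>) P = r \<mu> P)"
    and ls: "1 \<le> s" "s \<le> l"
    and Om: "\<forall>i. mindex h i \<longrightarrow> mabs h i \<le> s \<longrightarrow>
               degH_le q (int (degH q Lam) + int (mabs h i) * (2 * int g - 1)) (Om i) \<and>
               eqR q (Lam * mpow h (\<lambda>\<mu>. f \<mu> - R \<mu>) i) (Gpoly q ^ mabs h i * Om i)"
  shows "\<forall>j. mindex h j \<longrightarrow> 1 \<le> mabs h j \<longrightarrow> mabs h j \<le> l \<longrightarrow>
           (mabs h j < s \<longrightarrow>
              eqR q (Lam * mpow h f j)
                (\<Sum>i\<in>{i. mle h i j}. Om i * of_nat (mbinom h j i) * mpow h R (\<lambda>\<mu>. j \<mu> - i \<mu>)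
                    * Gpoly q ^ mabs h i)) \<and>
           (s \<le> mabs h j \<longrightarrow>
              congR q (Lam * mpow h f j)
                (\<Sum>i\<in>{i. mle h i j \<and> mabs h i < s}. Om i * of_nat (mbinom h j i)
                    * mpow h R (\<lambda>\<mu>. j \<mu> - i \<mu>) * Gpoly q ^ mabs h i)
                (Gpoly q ^ s))"
proof (intro allI impI conjI)
  have Om_eq: "\<And>i. mindex h i \<Longrightarrow> mabs h i \<le> s \<Longrightarrow>
      eqR q (Lam * mpow h (\<lambda>\<mu>. f \<mu> - R \<mu>) i) (Gpoly q ^ mabs h i * Om i)"
    using Om by blast
  fix j
  show "eqR q (Lam * mpow h f j)
      (\<Sum>i\<in>{i. mle h i j}. Om i * of_nat (mbinom h j i) * mpow h R (\<lambda>\<mu>. j \<mu> - i \<mu>)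
        * Gpoly q ^ mabs h i)" if "mabs h j < s"
    using mpow_expansion_modulo(1)[OF Om_eq that] .
  show "congR q (Lam * mpow h f j)
      (\<Sum>i\<in>{i. mle h i j \<and> mabs h i < s}. Om i * of_nat (mbinom h j i)
        * mpow h R (\<lambda>\<mu>. j \<mu> - i \<mu>) * Gpoly q ^ mabs h i) (Gpoly q ^ s)" if "s \<le> mabs h j"
    using mpow_expansion_modulo(2)[OF Om_eq that] .
qed

end
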